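(* Let $P$ be a finite poset, $I\in\mathcal{IC}(P)$ and $x\in\nabla(I)-I$. Then $x\in\mathrm{Row}(I)$ if and only if $x\in\lceil I\rceil$.
   Context: All posets are finite. For a poset $P$, a subset $I\subseteq P$ is interval-closed if for all $x,y\in I$ and $z\in P$ with $x\le z\le y$ we have $z\in I$; $\mathcal{IC}(P)$ is the set of interval-closed subsets of $P$. For $x\in P$ the toggle $t_x:\mathcal{IC}(P)\to\mathcal{IC}(P)$ is defined by $t_x(I)=I\triangle\{x\}$ if $I\triangle\{x\}\in\mathcal{IC}(P)$ and $t_x(I)=I$ otherwise. Rowmotion is $\mathrm{Row}=t_{x_1}\circ t_{x_2}\circ\cdots\circ t_{x_N}:\mathcal{IC}(P)\to\mathcal{IC}(P)$, where $(x_1,\dots,x_N)$ is a linear extension of $P$ (so elements are toggled from the top of the poset down); this does not depend on the choice of linear extension. $\nabla(I)$ is the smallest order filter containing $I$, and the ceiling $\lceil I\rceil$ is the set of minimal elements of $\nabla(I)-I$. *)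

theory Defs
  imports Main
begin

text \<open>A finite poset is modelled as a finite carrier set P of a type of class order,
  carrying the induced partial order.\<close>

definition interval_closed :: "'a::order set \<Rightarrow> 'a set \<Rightarrow> bool" where
  "interval_closed P I \<longleftrightarrow> I \<subseteq> P \<and>
     (\<forall>x\<in>I. \<forall>y\<in>I. \<forall>z\<in>P. x \<le> z \<and> z \<le> y \<longrightarrow> z \<in> I)"

definition IC :: "'a::order set \<Rightarrow> 'a set set" where
  "IC P = {I. interval_closed P I}"

definition toggle :: "'a::order set \<Rightarrow> 'a \<Rightarrow> 'a set \<Rightarrow> 'a set" where
  "toggle P x I = (if ((I - {x}) \<union> ({x} - I)) \<in> IC P then ((I - {x}) \<union> ({x} - I)) else I)"

definition linear_extension :: "'a::order set \<Rightarrow> 'a list \<Rightarrow> bool" where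
  "linear_extension P xs \<longleftrightarrow> distinct xs \<and> set xs = P \<and>
     (\<forall>i<length xs. \<forall>j<length xs. xs ! i < xs ! j \<longrightarrow> i < j)"

definition rowmotion_wrt :: "'a::order set \<Rightarrow> 'a list \<Rightarrow> 'a set \<Rightarrow> 'a set" where
  "rowmotion_wrt P xs I = foldr (toggle P) xs I"

definition up_closure :: "'a::order set \<Rightarrow> 'a set \<Rightarrow> 'a set" where
  "up_closure P I = {y\<in>P. \<exists>x\<in>I. x \<le> y}"

definition ceiling_set :: "'a::order set \<Rightarrow> 'a set \<Rightarrow> 'a set" where
  "ceiling_set P I = {y \<in> up_closure P I - I. \<forall>z\<in>up_closure P I - I. \<not> z < y}"

end

theory Submission
  imports Defs
begin

text \<open>Write the linear extension as \<open>ys @ x # zs\<close> and let \<open>J\<close> be the state just before \<open>x\<close>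
  is toggled, i.e. after toggling \<open>zs\<close>. Since \<open>zs\<close> contains nothing below \<open>x\<close>, \<open>J\<close> agrees
  with \<open>I\<close> below \<open>x\<close>. Every \<open>y > x\<close> lies in \<open>zs\<close>, is not in \<open>I\<close>, and cannot be toggled in:
  the state at that moment contains some \<open>a \<le> x\<close> from \<open>I\<close> but not \<open>x\<close>, so adding \<open>y\<close> would
  break interval-closedness. Hence \<open>x\<close> is toggled in exactly when \<open>J \<union> {x}\<close> is
  interval-closed, which (\<open>J\<close> being empty above \<open>x\<close> and equal to \<open>I\<close> below it) happens
  exactly when no element of \<open>\<nabla>(I) - I\<close> lies strictly below \<open>x\<close>; the toggles in \<open>ys\<close>
  do not touch \<open>x\<close>.\<close>

lemma linear_extension_append_not_less:
  assumes "linear_extension P (ys @ zs)" "u \<in> set ys" "v \<in> set zs"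
  shows "\<not> v < u"
proof
  assume "v < u"
  obtain i where i: "i < length ys" "ys ! i = u" using assms(2) by (auto simp: in_set_conv_nth)
  obtain j where j: "j < length zs" "zs ! j = v" using assms(3) by (auto simp: in_set_conv_nth)
  have "(ys @ zs) ! (length ys + j) < (ys @ zs) ! i"
    using i j \<open>v < u\<close> by (simp add: nth_append)
  then have "length ys + j < i"
    using assms(1) i j unfolding linear_extension_def by (metis add_less_cancel_left length_append
        trans_less_add1)
  then show False using i by simp
qed

lemma mem_foldr_toggle_notin:
  "w \<notin> set zs \<Longrightarrow> w \<in> foldr (toggle P) zs S \<longleftrightarrow> w \<in> S"
  by (induction zs) (auto simp: toggle_def)

lemma foldr_toggle_in_IC: "S \<in> IC P \<Longrightarrow> foldr (toggle P) zs S \<in> IC P"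
  by (induction zs) (auto simp: toggle_def)

lemma mem_foldr_toggle_below:
  assumes "linear_extension P (ys @ zs)" "v \<in> set ys" "w < v"
  shows "w \<in> foldr (toggle P) zs S \<longleftrightarrow> w \<in> S"
  using assms linear_extension_append_not_less mem_foldr_toggle_notin by metis

lemma mem_toggle_iff_insert_IC:
  "x \<notin> J \<Longrightarrow> x \<in> toggle P x J \<longleftrightarrow> insert x J \<in> IC P"
proof -
  assume "x \<notin> J"
  then have "(J - {x}) \<union> ({x} - J) = insert x J" by auto
  with \<open>x \<notin> J\<close> show ?thesis by (auto simp: toggle_def)
qed

lemma IC_subset: "S \<in> IC P \<Longrightarrow> S \<subseteq> P"
  unfolding IC_def interval_closed_def by blast

lemma IC_between: "S \<in> IC P \<Longrightarrow> p \<in> S \<Longrightarrow> q \<in> S \<Longrightarrow> z \<in> P \<Longrightarrow> p \<le> z \<Longrightarrow> z \<le> q \<Longrightarrow> z \<in> S"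
  unfolding IC_def interval_closed_def by blast

lemma toggle_above_gap:
  assumes "a \<in> K" "x \<notin> K" "x \<in> P" "a \<le> x" "x < y" "y \<notin> K"
  shows "toggle P y K = K"
proof -
  have "insert y K \<notin> IC P"
    using IC_between[of "insert y K" P a y x] assms less_imp_le[OF assms(5)] by auto
  then show ?thesis using mem_toggle_iff_insert_IC[OF \<open>y \<notin> K\<close>] assms(6)
    by (auto simp: toggle_def)
qed

lemma foldr_toggle_excludes_above:
  assumes le: "linear_extension P (ys @ x # zs)" and "I \<in> IC P"
    and x: "x \<in> up_closure P I - I" and "y \<in> P" "x < y"
  shows "y \<notin> foldr (toggle P) zs I"
proof -
  obtain a where "a \<in> I" "a \<le> x" "x \<in> P" "x \<notin> I" using x by (auto simp: up_closure_def)
  have "y \<notin> set ys"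
    using linear_extension_append_not_less[of P ys "x # zs" y x] le \<open>x < y\<close> by auto
  moreover have "y \<in> set (ys @ x # zs)" using le \<open>y \<in> P\<close> by (simp add: linear_extension_def)
  ultimately have "y \<in> set zs" using \<open>x < y\<close> by auto
  then obtain us vs where zs: "zs = us @ y # vs" by (meson split_list)
  have dist: "distinct (ys @ x # us @ y # vs)" using le zs by (simp add: linear_extension_def)
  define K where "K = foldr (toggle P) vs I"
  have le': "linear_extension P ((ys @ x # us @ [y]) @ vs)" using le zs by simp
  have aK: "a \<in> K" using mem_foldr_toggle_below[OF le', of y a] \<open>a \<in> I\<close> \<open>a \<le> x\<close> \<open>x < y\<close>
    by (simp add: K_def)
  have xK: "x \<notin> K" using mem_foldr_toggle_below[OF le', of y x] \<open>x \<notin> I\<close> \<open>x < y\<close>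
    by (simp add: K_def)
  have "y \<notin> I" using IC_between[OF \<open>I \<in> IC P\<close> \<open>a \<in> I\<close> _ \<open>x \<in> P\<close> \<open>a \<le> x\<close>] \<open>x < y\<close> \<open>x \<notin> I\<close>
    by force
  then have yK: "y \<notin> K" using dist mem_foldr_toggle_notin[of y vs] by (simp add: K_def)
  have "toggle P y K = K" using toggle_above_gap[OF aK xK \<open>x \<in> P\<close> \<open>a \<le> x\<close> \<open>x < y\<close> yK] .
  then show ?thesis
    using dist yK mem_foldr_toggle_notin[of y us] by (simp add: zs K_def)
qed

lemma insert_IC_iff_ceiling:
  assumes "J \<in> IC P" and x: "x \<in> up_closure P I - I"
    and below: "\<And>w. w < x \<Longrightarrow> w \<in> J \<longleftrightarrow> w \<in> I"
    and above: "\<And>y. y \<in> P \<Longrightarrow> x < y \<Longrightarrow> y \<notin> J"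
    and "x \<notin> J"
  shows "insert x J \<in> IC P \<longleftrightarrow> x \<in> ceiling_set P I"
proof
  assume ic: "insert x J \<in> IC P"
  have "\<not> z < x" if z: "z \<in> up_closure P I - I" for z
  proof
    assume "z < x"
    obtain b where "b \<in> I" "b \<le> z" "z \<in> P" "z \<notin> I" using z by (auto simp: up_closure_def)
    then have "b \<in> J" using below \<open>z < x\<close> by (meson order.strict_trans1)
    then have "z \<in> insert x J"
      using IC_between[OF ic, of b x z] \<open>b \<le> z\<close> \<open>z < x\<close> \<open>z \<in> P\<close> by auto
    then show False using below \<open>z < x\<close> \<open>z \<notin> I\<close> by auto
  qed
  then show "x \<in> ceiling_set P I" using x by (simp add: ceiling_set_def)
next
  assume ceil: "x \<in> ceiling_set P I"
  have xP: "x \<in> P" using x by (simp add: up_closure_def)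
  have "z \<in> insert x J"
    if p: "p \<in> insert x J" and q: "q \<in> insert x J" and "z \<in> P" "p \<le> z" "z \<le> q" for p q z
  proof -
    consider "p \<in> J" "q \<in> J" | "q = x" | "p = x" "q \<in> J" using p q by blast
    then show ?thesis
    proof cases
      case 1
      then show ?thesis using IC_between[OF \<open>J \<in> IC P\<close>] that by blast
    next
      case 2
      show ?thesis
      proof (cases "z = x")
        case False
        then have "z < x" using 2 \<open>z \<le> q\<close> by simp
        then have "p \<in> I" using p below \<open>p \<le> z\<close> by fastforce
        then have "z \<in> up_closure P I" using \<open>p \<le> z\<close> \<open>z \<in> P\<close> by (auto simp: up_closure_def)
        then have "z \<in> I" using ceil \<open>z < x\<close> by (auto simp: ceiling_set_def)
        then show ?thesis using below \<open>z < x\<close> by simp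
      qed simp
    next
      case 3
      then have "q = x" using above IC_subset[OF \<open>J \<in> IC P\<close>] \<open>p \<le> z\<close> \<open>z \<le> q\<close>
        by (metis order.not_eq_order_implies_strict order.trans subsetD)
      then show ?thesis using 3 \<open>x \<notin> J\<close> by simp
    qed
  qed
  moreover have "insert x J \<subseteq> P" using IC_subset[OF \<open>J \<in> IC P\<close>] xP by blast
  ultimately show "insert x J \<in> IC P" unfolding IC_def interval_closed_def by blast
qed

theorem lemma2:
  fixes P :: "'a::order set" and I :: "'a set" and xs :: "'a list" and x :: 'a
  assumes "finite P"
    and "I \<in> IC P"
    and "linear_extension P xs"
    and "x \<in> up_closure P I - I"
  shows "x \<in> rowmotion_wrt P xs I \<longleftrightarrow> x \<in> ceiling_set P I"
proof -
  have "x \<in> set xs" using assms(3,4) by (auto simp: linear_extension_def up_closure_def)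
  then obtain ys zs where xs: "xs = ys @ x # zs" by (metis split_list)
  have le: "linear_extension P (ys @ x # zs)" using assms(3) xs by simp
  have "x \<notin> set ys" "x \<notin> set zs" using le by (auto simp: linear_extension_def)
  define J where "J = foldr (toggle P) zs I"
  have "x \<notin> J" using \<open>x \<notin> set zs\<close> assms(4) by (simp add: J_def mem_foldr_toggle_notin)
  have below: "w \<in> J \<longleftrightarrow> w \<in> I" if "w < x" for w
    using mem_foldr_toggle_below[of P "ys @ [x]" zs x w I] le that by (simp add: J_def)
  have "x \<in> rowmotion_wrt P xs I \<longleftrightarrow> x \<in> toggle P x J"
    using \<open>x \<notin> set ys\<close> by (simp add: rowmotion_wrt_def xs J_def mem_foldr_toggle_notin)
  also have "\<dots> \<longleftrightarrow> insert x J \<in> IC P" using \<open>x \<notin> J\<close> by (rule mem_toggle_iff_insert_IC)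
  also have "\<dots> \<longleftrightarrow> x \<in> ceiling_set P I"
    using insert_IC_iff_ceiling[OF _ assms(4) below _ \<open>x \<notin> J\<close>]
      foldr_toggle_in_IC[OF assms(2)] foldr_toggle_excludes_above[OF le assms(2,4)]
    by (simp add: J_def)
  finally show ?thesis .
qed

end
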